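(* Let $\mathcal{C}$ be an $\mathbb{F}_q\mathcal{R}$-skew cyclic code of length $(\alpha,\beta)$, viewed inside $R_{\alpha,\beta}$, and let $N=\{k(x)\in\mathbb{F}_q[x;\Theta]/\langle x^\alpha-1\rangle : (k(x),0)\in\mathcal{C}\}$. Then $N$ is a left $\mathbb{F}_q[x;\Theta]$-submodule of $\mathbb{F}_q[x;\Theta]/\langle x^\alpha-1\rangle$ generated by a right divisor of $x^\alpha-1$.
   Context: Let $p$ be a prime, $q=p^m$, $\mathcal{R}=\mathbb{F}_q[u]/\langle u^2-u\rangle$. Fix $i$; $\Theta(a)=a^{p^i}$ on $\mathbb{F}_q$ and $\theta(a+ub)=a^{p^i}+ub^{p^i}$ on $\mathcal{R}$; $\eta(a+ub)=a$. $\mathbb{F}_q[x;\Theta]$, $\mathcal{R}[x;\theta]$ are skew polynomial rings with multiplication determined by $(ax^i)(bx^j)=a\Theta^i(b)x^{i+j}$ (resp. with $\theta$). $R_{\alpha,\beta}=\mathbb{F}_q[x;\Theta]/\langle x^\alpha-1\rangle\times\mathcal{R}[x;\theta]/\langle x^\beta-1\rangle$, identified with $\mathbb{F}_q^\alpha\times\mathcal{R}^\beta$ via coefficient vectors, is a left $\mathcal{R}[x;\theta]$-module via $r(x)*(k(x),t(x))=(\eta(r(x))k(x),r(x)t(x))$ ($\eta$ coefficientwise, reduction modulo $x^\alpha-1$, $x^\beta-1$). An $\mathbb{F}_q\mathcal{R}$-skew cyclic code of length $(\alpha,\beta)$ is an $\mathcal{R}$-submodule $\mathcal{C}$ of $\mathbb{F}_q^\alpha\times\mathcal{R}^\beta$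 (with $s*(x,y)=(\eta(s)x,sy)$ componentwise) closed under $\sigma(x_0,\dots,x_{\alpha-1},y_0,\dots,y_{\beta-1})=(\Theta(x_{\alpha-1}),\Theta(x_0),\dots,\Theta(x_{\alpha-2}),\theta(y_{\beta-1}),\theta(y_0),\dots,\theta(y_{\beta-2}))$; equivalently a left $\mathcal{R}[x;\theta]$-submodule of $R_{\alpha,\beta}$. *)

theory Defs
  imports "HOL-Computational_Algebra.Polynomial"
begin

definition Theta :: "nat \<Rightarrow> nat \<Rightarrow> 'a::field \<Rightarrow> 'a" where
  "Theta p i a = a ^ (p ^ i)"

(* R = F_q[u]/<u^2-u>, element a + u b represented as the pair (a,b) *)
definition R_add :: "'a::field \<times> 'a \<Rightarrow> 'a \<times> 'a \<Rightarrow> 'a \<times> 'a" where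
  "R_add s t = (fst s + fst t, snd s + snd t)"

definition R_mult :: "'a::field \<times> 'a \<Rightarrow> 'a \<times> 'a \<Rightarrow> 'a \<times> 'a" where
  "R_mult s t = (fst s * fst t, fst s * snd t + snd s * fst t + snd s * snd t)"

definition theta_R :: "nat \<Rightarrow> nat \<Rightarrow> 'a::field \<times> 'a \<Rightarrow> 'a \<times> 'a" where
  "theta_R p i s = (Theta p i (fst s), Theta p i (snd s))"

definition eta :: "'a::field \<times> 'a \<Rightarrow> 'a" where
  "eta s = fst s"

definition rshift :: "'b list \<Rightarrow> 'b list" where
  "rshift xs = (if xs = [] then [] else last xs # butlast xs)"

definition vadd :: "'a::field list \<times> ('a \<times> 'a) list \<Rightarrow> 'a list \<times> ('a \<times> 'a) list
                    \<Rightarrow> 'a list \<times> ('a \<times> 'a) list" where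
  "vadd c d = (map2 (+) (fst c) (fst d), map2 R_add (snd c) (snd d))"

definition smul :: "'a::field \<times> 'a \<Rightarrow> 'a list \<times> ('a \<times> 'a) list \<Rightarrow> 'a list \<times> ('a \<times> 'a) list" where
  "smul s c = (map (\<lambda>a. eta s * a) (fst c), map (R_mult s) (snd c))"

definition skew_sigma :: "nat \<Rightarrow> nat \<Rightarrow> 'a::field list \<times> ('a \<times> 'a) list \<Rightarrow> 'a list \<times> ('a \<times> 'a) list" where
  "skew_sigma p i c = (map (Theta p i) (rshift (fst c)), map (theta_R p i) (rshift (snd c)))"

definition FR_skew_cyclic_code ::
  "nat \<Rightarrow> nat \<Rightarrow> nat \<Rightarrow> nat \<Rightarrow> ('a::field list \<times> ('a \<times> 'a) list) set \<Rightarrow> bool" where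
  "FR_skew_cyclic_code p i \<alpha> \<beta> C \<longleftrightarrow>
     (\<forall>c\<in>C. length (fst c) = \<alpha> \<and> length (snd c) = \<beta>) \<and>
     (replicate \<alpha> 0, replicate \<beta> (0,0)) \<in> C \<and>
     (\<forall>c\<in>C. \<forall>d\<in>C. vadd c d \<in> C) \<and>
     (\<forall>s. \<forall>c\<in>C. smul s c \<in> C) \<and>
     (\<forall>c\<in>C. skew_sigma p i c \<in> C)"

definition skew_mult :: "('a::field \<Rightarrow> 'a) \<Rightarrow> 'a poly \<Rightarrow> 'a poly \<Rightarrow> 'a poly" where
  "skew_mult T f g = (\<Sum>i\<le>degree f. \<Sum>j\<le>degree g. monom (coeff f i * (T ^^ i) (coeff g j)) (i + j))"

definition skew_right_dvd :: "('a::field \<Rightarrow> 'a) \<Rightarrow> 'a poly \<Rightarrow> 'a poly \<Rightarrow> bool" where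
  "skew_right_dvd T g f \<longleftrightarrow> (\<exists>h. skew_mult T h g = f)"

(* canonical representative (degree < alpha) of f modulo the left ideal generated by x^alpha - 1 *)
definition cyc_red :: "nat \<Rightarrow> 'a::field poly \<Rightarrow> 'a poly" where
  "cyc_red \<alpha> f = (\<Sum>j\<le>degree f. monom (coeff f j) (j mod \<alpha>))"

(* left F_q[x;T]-submodule of F_q[x;T]/<x^alpha - 1>, elements represented by polys of degree < alpha *)
definition skew_left_submodule :: "('a::field \<Rightarrow> 'a) \<Rightarrow> nat \<Rightarrow> 'a poly set \<Rightarrow> bool" where
  "skew_left_submodule T \<alpha> S \<longleftrightarrow>
     (\<forall>s\<in>S. degree s < \<alpha>) \<and> 0 \<in> S \<and>
     (\<forall>s\<in>S. \<forall>t\<in>S. s + t \<in> S) \<and>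
     (\<forall>f. \<forall>s\<in>S. cyc_red \<alpha> (skew_mult T f s) \<in> S)"

end

(* The code is closed under
   addition, under scalars acting through eta, and under sigma, which on such a codeword is
   left multiplication by x followed by reduction modulo x^alpha - 1; hence N is closed under
   left multiplication by every monomial c x^k, i.e. it is a left submodule.  If N = 0 it is
   generated by x^alpha - 1 itself, since Theta fixes 1 and -1.  Otherwise take a nonzero g in N
   of least degree: right division by g in F_q[x;Theta] works because Theta is injective, and the
   remainder of any element of N lies in N and has smaller degree, so it vanishes.  Applied to
   x^alpha - 1, which reduces to 0, this shows that g is a right divisor of x^alpha - 1. *)
theory Submission
  imports Defs "HOL-Number_Theory.Residues"
begin

(* HOL-Algebra, imported with Residues for CHAR_dvd_CARD, has its own coeff, monom and smult. *)
hide_const (open) up_ring.coeff up_ring.monom module.smult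

lemma funpow_fixpoint: "f x = x \<Longrightarrow> (f ^^ n) x = x"
  by (induction n) auto

lemma funpow_eq_0_imp_eq_0:
  fixes f :: "'a::zero \<Rightarrow> 'a"
  assumes "\<And>x. f x = 0 \<Longrightarrow> x = 0"
  shows "(f ^^ n) x = 0 \<Longrightarrow> x = 0"
proof (induction n arbitrary: x)
  case (Suc n)
  then show ?case using assms[of "(f ^^ n) x"] by simp
qed simp

lemma Poly_map2_add:
  assumes "length xs = length ys"
  shows "Poly (map2 (+) xs ys) = Poly xs + (Poly ys :: 'a::comm_monoid_add poly)"
  by (rule poly_eqI) (use assms in \<open>auto simp: nth_default_def\<close>)

lemma degree_Poly_less:
  assumes "xs \<noteq> []"
  shows "degree (Poly xs) < length xs"
proof -
  have "degree (Poly xs) \<le> length xs - 1"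
    by (rule degree_le) (auto simp: nth_default_def)
  moreover have "0 < length xs" using assms by simp
  ultimately show ?thesis by linarith
qed

lemma cyc_red_eq_sum_le:
  assumes "degree f \<le> n"
  shows "cyc_red \<alpha> f = (\<Sum>j\<le>n. monom (coeff f j) (j mod \<alpha>))"
  unfolding cyc_red_def by (rule sum.mono_neutral_left) (use assms in \<open>auto simp: coeff_eq_0\<close>)

lemma cyc_red_0 [simp]: "cyc_red \<alpha> 0 = 0"
  by (simp add: cyc_red_def)

lemma cyc_red_add: "cyc_red \<alpha> (f + g) = cyc_red \<alpha> f + cyc_red \<alpha> g"
proof -
  let ?n = "max (degree f) (degree g)"
  have "degree (f + g) \<le> ?n" by (simp add: degree_add_le)
  then show ?thesis
    by (simp add: cyc_red_eq_sum_le[of _ ?n] sum.distrib[symmetric] add_monom)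
qed

lemma cyc_red_diff: "cyc_red \<alpha> (f - g) = cyc_red \<alpha> f - cyc_red \<alpha> g"
  using cyc_red_add[of \<alpha> "f - g" g] by (simp add: eq_diff_eq)

lemma cyc_red_sum: "cyc_red \<alpha> (\<Sum>i\<in>A. f i) = (\<Sum>i\<in>A. cyc_red \<alpha> (f i))"
  by (induction A rule: infinite_finite_induct) (simp_all add: cyc_red_add)

lemma cyc_red_monom: "cyc_red \<alpha> (monom c k) = monom c (k mod \<alpha>)"
  unfolding cyc_red_eq_sum_le[OF degree_monom_le]
  by (subst sum.remove[of _ k]) (auto intro!: sum.neutral)

lemma cyc_red_id:
  assumes "degree f < \<alpha>"
  shows "cyc_red \<alpha> f = f"
  unfolding cyc_red_def
  by (subst (2) poly_as_sum_of_monoms[symmetric]) (rule sum.cong, use assms in auto)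

lemma cyc_red_x_pow_minus_1: "0 < \<alpha> \<Longrightarrow> cyc_red \<alpha> (monom 1 \<alpha> - 1) = 0"
  by (simp add: cyc_red_diff cyc_red_monom cyc_red_id)

(* The coefficient at position e of x^k s reduced modulo x^n - 1 comes from position
   mod_diff n e k = (e - k) mod n of s. *)
definition mod_diff :: "nat \<Rightarrow> nat \<Rightarrow> nat \<Rightarrow> nat" where
  "mod_diff n e k = nat ((int e - int k) mod int n)"

lemma mod_diff_less: "0 < n \<Longrightarrow> mod_diff n e k < n"
  unfolding mod_diff_def by (simp add: nat_less_iff)

lemma mod_add_eq_iff_eq_mod_diff:
  assumes "j < n" and "e < n"
  shows "(k + j) mod n = e \<longleftrightarrow> j = mod_diff n e k"
proof -
  have "(k + j) mod n = e \<longleftrightarrow> int ((k + j) mod n) = int (e mod n)"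
    using assms by simp
  also have "\<dots> \<longleftrightarrow> (int k + int j) mod int n = int e mod int n"
    by (simp only: of_nat_mod of_nat_add)
  also have "\<dots> \<longleftrightarrow> int j mod int n = (int e - int k) mod int n"
    by (simp add: mod_eq_dvd_iff algebra_simps)
  also have "\<dots> \<longleftrightarrow> j = mod_diff n e k"
    unfolding mod_diff_def using assms by auto
  finally show ?thesis .
qed

lemma mod_diff_0_right: "e < n \<Longrightarrow> mod_diff n e 0 = e"
  unfolding mod_diff_def by simp

lemma mod_diff_Suc_Suc: "mod_diff n (Suc e) (Suc k) = mod_diff n e k"
  unfolding mod_diff_def by simp

lemma mod_diff_0_Suc:
  assumes "0 < n"
  shows "mod_diff n 0 (Suc k) = mod_diff n (n - 1) k"
proof -
  have "int (n - 1) - int k = - int (Suc k) + int n"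
    using assms by simp
  then show ?thesis
    unfolding mod_diff_def by (simp only: mod_add_self2) simp
qed

lemma length_rshift [simp]: "length (rshift xs) = length xs"
  by (simp add: rshift_def)

lemma nth_rshift: "i < length xs \<Longrightarrow> rshift xs ! i = (if i = 0 then last xs else xs ! (i - 1))"
  by (auto simp: rshift_def nth_Cons' nth_butlast)

lemma rshift_replicate: "rshift (replicate n x) = replicate n x"
  by (cases n) (auto simp: rshift_def replicate_append_same[symmetric] butlast_append)

lemma length_funpow_map_rshift [simp]:
  fixes T :: "'a \<Rightarrow> 'a"
  shows "length (((\<lambda>ys. map T (rshift ys)) ^^ k) xs) = length xs"
  by (induction k) simp_all

lemma nth_funpow_map_rshift:
  fixes T :: "'a \<Rightarrow> 'a"
  assumes "e < length xs"
  shows "((\<lambda>ys. map T (rshift ys)) ^^ k) xs ! e = (T ^^ k) (xs ! mod_diff (length xs) e k)"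
  using assms
proof (induction k arbitrary: e)
  case 0
  then show ?case by (simp add: mod_diff_0_right)
next
  case (Suc k)
  show ?case
  proof (cases e)
    case 0
    let ?ys = "((\<lambda>ys. map T (rshift ys)) ^^ k) xs"
    have "?ys \<noteq> []" and "0 < length xs"
      using Suc.prems by (auto simp flip: length_greater_0_conv)
    with 0 Suc.IH[of "length xs - 1"] show ?thesis
      by (simp add: nth_rshift last_conv_nth mod_diff_0_Suc)
  next
    case (Suc e')
    with Suc.prems Suc.IH[of e'] show ?thesis
      by (simp add: nth_rshift mod_diff_Suc_Suc)
  qed
qed

lemma skew_mult_0_left [simp]: "skew_mult T 0 g = 0"
  by (simp add: skew_mult_def)

context
  fixes T :: "'a::field \<Rightarrow> 'a"
  assumes T_0: "T 0 = 0"
begin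

lemma funpow_T_0 [simp]: "(T ^^ k) 0 = 0"
  using T_0 by (rule funpow_fixpoint)

lemma skew_mult_eq_sum_le:
  assumes "degree f \<le> a" and "degree g \<le> b"
  shows "skew_mult T f g = (\<Sum>i\<le>a. \<Sum>j\<le>b. monom (coeff f i * (T ^^ i) (coeff g j)) (i + j))"
proof -
  have "skew_mult T f g = (\<Sum>i\<le>degree f. \<Sum>j\<le>b. monom (coeff f i * (T ^^ i) (coeff g j)) (i + j))"
    unfolding skew_mult_def
    by (rule sum.cong[OF refl], rule sum.mono_neutral_left) (use assms in \<open>auto simp: coeff_eq_0\<close>)
  also have "\<dots> = (\<Sum>i\<le>a. \<Sum>j\<le>b. monom (coeff f i * (T ^^ i) (coeff g j)) (i + j))"
    by (rule sum.mono_neutral_left) (use assms in \<open>auto simp: coeff_eq_0\<close>)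
  finally show ?thesis .
qed

lemma skew_mult_add_left: "skew_mult T (f1 + f2) g = skew_mult T f1 g + skew_mult T f2 g"
proof -
  let ?a = "max (degree f1) (degree f2)"
  have "degree (f1 + f2) \<le> ?a" by (simp add: degree_add_le)
  then show ?thesis
    by (simp add: skew_mult_eq_sum_le[of _ ?a _ "degree g"] sum.distrib[symmetric] add_monom
        distrib_right)
qed

lemma skew_mult_sum_left: "skew_mult T (\<Sum>i\<in>A. f i) g = (\<Sum>i\<in>A. skew_mult T (f i) g)"
  by (induction A rule: infinite_finite_induct) (simp_all add: skew_mult_add_left)

lemma skew_mult_eq_sum_monom_left:
  "skew_mult T f g = (\<Sum>j\<le>degree f. skew_mult T (monom (coeff f j) j) g)"
  by (subst poly_as_sum_of_monoms[symmetric]) (rule skew_mult_sum_left)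

lemma skew_mult_monom_left:
  assumes "degree g \<le> b"
  shows "skew_mult T (monom c k) g = (\<Sum>j\<le>b. monom (c * (T ^^ k) (coeff g j)) (k + j))"
proof -
  have "skew_mult T (monom c k) g
      = (\<Sum>i\<le>k. \<Sum>j\<le>b. monom (coeff (monom c k) i * (T ^^ i) (coeff g j)) (i + j))"
    by (rule skew_mult_eq_sum_le) (use assms in \<open>auto simp: degree_monom_le\<close>)
  also have "\<dots> = (\<Sum>j\<le>b. monom (coeff (monom c k) k * (T ^^ k) (coeff g j)) (k + j))"
    by (subst sum.remove[of _ k]) (auto intro!: sum.neutral)
  finally show ?thesis by simp
qed

lemma coeff_skew_mult_monom_left:
  "coeff (skew_mult T (monom c k) g) n = (if k \<le> n then c * (T ^^ k) (coeff g (n - k)) else 0)"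
proof -
  have "coeff (skew_mult T (monom c k) g) n
      = (\<Sum>j\<le>degree g. if j = n - k then (if k \<le> n then c * (T ^^ k) (coeff g j) else 0) else 0)"
    unfolding skew_mult_monom_left[OF order.refl] coeff_sum coeff_monom by (rule sum.cong) auto
  then show ?thesis by (auto simp: coeff_eq_0)
qed

lemma skew_mult_const_left: "skew_mult T (monom c 0) g = smult c g"
  by (rule poly_eqI) (simp add: coeff_skew_mult_monom_left)

lemma skew_right_division:
  assumes T_eq_0: "\<And>x. T x = 0 \<Longrightarrow> x = 0" and "g \<noteq> 0"
  obtains q r where "s = skew_mult T q g + r" and "r = 0 \<or> degree r < degree g"
proof -
  have "\<exists>q r. s = skew_mult T q g + r \<and> (r = 0 \<or> degree r < degree g)"
  proof (induction "degree s" arbitrary: s rule: less_induct)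
    case less
    show ?case
    proof (cases "degree s < degree g")
      case True
      then show ?thesis by (intro exI[of _ 0] exI[of _ s]) simp
    next
      case False
      define k where "k = degree s - degree g"
      define c where "c = lead_coeff s / (T ^^ k) (lead_coeff g)"
      define s' where "s' = s - skew_mult T (monom c k) g"
      have "(T ^^ k) (lead_coeff g) \<noteq> 0"
        using funpow_eq_0_imp_eq_0[where n=k and x="lead_coeff g", OF T_eq_0] \<open>g \<noteq> 0\<close> by auto
      then have "coeff s' n = 0" if "degree s \<le> n" for n
        using False that
        by (cases "n = degree s") (auto simp: s'_def coeff_skew_mult_monom_left k_def c_def coeff_eq_0)
      then have "s' = 0 \<or> degree s' < degree s"
        by (metis leading_coeff_0_iff not_le)
      then show ?thesis
      proof
        assume "s' = 0"
        then show ?thesis by (intro exI[of _ "monom c k"] exI[of _ 0]) (simp add: s'_def)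
      next
        assume "degree s' < degree s"
        with less obtain q r where "s' = skew_mult T q g + r" "r = 0 \<or> degree r < degree g"
          by blast
        then show ?thesis
          by (intro exI[of _ "monom c k + q"] exI[of _ r])
            (simp add: s'_def skew_mult_add_left algebra_simps)
      qed
    qed
  qed
  with that show ?thesis by blast
qed

lemma cyc_red_skew_mult_x_pow_minus_1:
  assumes T_1: "T 1 = 1" and T_minus_1: "T (-1) = -1" and "0 < \<alpha>"
  shows "cyc_red \<alpha> (skew_mult T f (monom 1 \<alpha> - 1)) = 0"
proof -
  have "(T ^^ k) 1 = 1" "(T ^^ k) (-1) = -1" for k
    by (simp_all add: funpow_fixpoint T_1 T_minus_1)
  then have "skew_mult T (monom c k) (monom 1 \<alpha> - 1) = monom c (k + \<alpha>) - monom c k" for c k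
    by (intro poly_eqI) (use \<open>0 < \<alpha>\<close> in \<open>auto simp: coeff_skew_mult_monom_left coeff_monom\<close>)
  then show ?thesis
    by (subst skew_mult_eq_sum_monom_left) (simp add: cyc_red_sum cyc_red_diff cyc_red_monom)
qed

lemma coeff_cyc_red_skew_mult_monom_left:
  assumes "degree s < \<alpha>"
  shows "coeff (cyc_red \<alpha> (skew_mult T (monom c k) s)) e
    = (if e < \<alpha> then c * (T ^^ k) (coeff s (mod_diff \<alpha> e k)) else 0)"
proof -
  have "coeff (cyc_red \<alpha> (skew_mult T (monom c k) s)) e
      = (\<Sum>j\<le>\<alpha> - 1. if (k + j) mod \<alpha> = e then c * (T ^^ k) (coeff s j) else 0)"
    using assms by (simp add: skew_mult_monom_left[of s "\<alpha> - 1"] cyc_red_sum cyc_red_monom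
        coeff_sum coeff_monom eq_commute)
  also have "\<dots> = (if e < \<alpha> then c * (T ^^ k) (coeff s (mod_diff \<alpha> e k)) else 0)"
  proof (cases "e < \<alpha>")
    case True
    then have "(\<Sum>j\<le>\<alpha> - 1. if (k + j) mod \<alpha> = e then c * (T ^^ k) (coeff s j) else 0)
        = (\<Sum>j\<le>\<alpha> - 1. if j = mod_diff \<alpha> e k then c * (T ^^ k) (coeff s j) else 0)"
      by (intro sum.cong refl) (simp add: mod_add_eq_iff_eq_mod_diff)
    with True mod_diff_less[of \<alpha> e k] show ?thesis by simp
  qed (use assms in \<open>auto intro!: sum.neutral\<close>)
  finally show ?thesis .
qed

(* Each coefficient of c x^k s modulo x^alpha - 1 receives a single term of the product, so T
   need not be additive: multiplying by x^k is exactly k applications of sigma. *)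
lemma cyc_red_skew_mult_monom_Poly:
  assumes "length xs = \<alpha>" and "0 < \<alpha>"
  shows "cyc_red \<alpha> (skew_mult T (monom c k) (Poly xs))
    = Poly (map ((*) c) (((\<lambda>ys. map T (rshift ys)) ^^ k) xs))"
proof (rule poly_eqI)
  fix e
  have "degree (Poly xs) < \<alpha>" using assms degree_Poly_less by fastforce
  then show "coeff (cyc_red \<alpha> (skew_mult T (monom c k) (Poly xs))) e
      = coeff (Poly (map ((*) c) (((\<lambda>ys. map T (rshift ys)) ^^ k) xs))) e"
    using assms by (simp add: coeff_cyc_red_skew_mult_monom_left nth_default_def
        nth_funpow_map_rshift mod_diff_less)
qed

lemma cyc_red_skew_mult_mem_if_monom_mem:
  assumes "0 \<in> S" and "\<And>a b. a \<in> S \<Longrightarrow> b \<in> S \<Longrightarrow> a + b \<in> S"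
    and "\<And>c k. cyc_red \<alpha> (skew_mult T (monom c k) s) \<in> S"
  shows "cyc_red \<alpha> (skew_mult T f s) \<in> S"
proof -
  have "(\<Sum>j\<in>J. cyc_red \<alpha> (skew_mult T (monom (coeff f j) j) s)) \<in> S" for J
    by (induction J rule: infinite_finite_induct) (simp_all add: assms)
  then show ?thesis by (subst skew_mult_eq_sum_monom_left) (simp add: cyc_red_sum)
qed

lemma skew_left_submodule_uminus:
  assumes "skew_left_submodule T \<alpha> N" and "s \<in> N"
  shows "- s \<in> N"
proof -
  have "cyc_red \<alpha> (skew_mult T (monom (-1) 0) s) \<in> N" and "degree s < \<alpha>"
    using assms unfolding skew_left_submodule_def by blast+
  then show ?thesis by (simp add: skew_mult_const_left cyc_red_id)
qed

lemma skew_left_submodule_right_dvd_of_min_degree: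
  assumes T_eq_0: "\<And>x. T x = 0 \<Longrightarrow> x = 0" and sub: "skew_left_submodule T \<alpha> N"
    and g: "g \<in> N" "g \<noteq> 0" and g_min: "\<And>h. h \<in> N \<Longrightarrow> h \<noteq> 0 \<Longrightarrow> degree g \<le> degree h"
    and s: "cyc_red \<alpha> s \<in> N"
  shows "\<exists>q. s = skew_mult T q g"
proof -
  obtain q r where qr: "s = skew_mult T q g + r" and r: "r = 0 \<or> degree r < degree g"
    using skew_right_division[OF T_eq_0 g(2)] by metis
  have "degree g < \<alpha>" and qg: "cyc_red \<alpha> (skew_mult T q g) \<in> N"
    using sub g(1) unfolding skew_left_submodule_def by blast+
  with r have "cyc_red \<alpha> r = r" by (auto intro: cyc_red_id)
  then have "r = cyc_red \<alpha> s + - cyc_red \<alpha> (skew_mult T q g)"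
    using qr by (simp add: cyc_red_add)
  then have "r \<in> N"
    using s qg skew_left_submodule_uminus[OF sub qg] sub unfolding skew_left_submodule_def by metis
  with g_min r have "r = 0" by force
  with qr show ?thesis by auto
qed

lemma skew_left_submodule_generated_by_right_dvd:
  assumes T_eq_0: "\<And>x. T x = 0 \<Longrightarrow> x = 0" and T_1: "T 1 = 1" and T_minus_1: "T (-1) = -1"
    and "0 < \<alpha>" and sub: "skew_left_submodule T \<alpha> N"
  shows "\<exists>g. skew_right_dvd T g (monom 1 \<alpha> - 1) \<and> N = {cyc_red \<alpha> (skew_mult T f g) | f. True}"
proof (cases "N = {0}")
  case True
  have "skew_right_dvd T (monom 1 \<alpha> - 1) (monom 1 \<alpha> - 1)"
    unfolding skew_right_dvd_def using skew_mult_const_left[of 1] by auto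
  moreover have "N = {cyc_red \<alpha> (skew_mult T f (monom 1 \<alpha> - 1)) | f. True}"
    using True cyc_red_skew_mult_x_pow_minus_1[OF T_1 T_minus_1 \<open>0 < \<alpha>\<close>] by auto
  ultimately show ?thesis by blast
next
  case False
  moreover have "0 \<in> N" and N_closed: "\<And>f s. s \<in> N \<Longrightarrow> cyc_red \<alpha> (skew_mult T f s) \<in> N"
    and N_deg: "\<And>s. s \<in> N \<Longrightarrow> degree s < \<alpha>"
    using sub unfolding skew_left_submodule_def by blast+
  ultimately obtain h where "h \<in> N" "h \<noteq> 0" by blast
  then obtain g where g: "g \<in> N" "g \<noteq> 0" and g_min: "\<And>h. h \<in> N \<Longrightarrow> h \<noteq> 0 \<Longrightarrow> degree g \<le> degree h"
    using ex_has_least_nat[of "\<lambda>h. h \<in> N \<and> h \<noteq> 0" h degree] by blast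
  have right_dvd: "\<exists>q. s = skew_mult T q g" if "cyc_red \<alpha> s \<in> N" for s
    using skew_left_submodule_right_dvd_of_min_degree[OF T_eq_0 sub g g_min that] .
  have "skew_right_dvd T g (monom 1 \<alpha> - 1)"
    unfolding skew_right_dvd_def
    using right_dvd[of "monom 1 \<alpha> - 1"] cyc_red_x_pow_minus_1[OF \<open>0 < \<alpha>\<close>] \<open>0 \<in> N\<close> by metis
  moreover have "N = {cyc_red \<alpha> (skew_mult T f g) | f. True}"
  proof (intro equalityI subsetI)
    fix s assume "s \<in> N"
    then have "cyc_red \<alpha> s = s" using N_deg cyc_red_id by blast
    moreover obtain q where "s = skew_mult T q g"
      using right_dvd[of s] \<open>s \<in> N\<close> calculation by auto
    ultimately have "s = cyc_red \<alpha> (skew_mult T q g)" by simp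
    then show "s \<in> {cyc_red \<alpha> (skew_mult T f g) | f. True}" by blast
  qed (use N_closed[OF g(1)] in blast)
  ultimately show ?thesis by blast
qed

end

lemma CHAR_eq_prime_of_card:
  assumes "prime p" and "card (UNIV :: 'a::{field,finite} set) = p ^ m"
  shows "CHAR('a) = p"
proof -
  have "prime CHAR('a)"
    by (simp add: finite_imp_CHAR_pos prime_CHAR_semidom)
  moreover have "CHAR('a) dvd p ^ m"
    using CHAR_dvd_CARD assms(2) by metis
  ultimately show ?thesis
    using assms(1) by (metis prime_dvd_power primes_dvd_imp_eq)
qed

lemma Theta_minus_1:
  assumes "prime p" and "card (UNIV :: 'a::{field,finite} set) = p ^ m"
  shows "Theta p i (-1 :: 'a) = -1"
proof (cases "odd p")
  case True
  then show ?thesis by (simp add: Theta_def minus_one_power_iff)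
next
  case False
  with assms(1) have "p = 2"
    by (metis dvd_refl prime_nat_iff two_is_prime_nat primes_dvd_imp_eq)
  with assms have "CHAR('a) = 2"
    using CHAR_eq_prime_of_card by blast
  then have "(-1 :: 'a) = 1"
    by (rule uminus_CHAR_2)
  then show ?thesis
    unfolding Theta_def by (metis power_one)
qed

definition fst_polys_of_zero_snd :: "nat \<Rightarrow> ('a::field list \<times> ('a \<times> 'a) list) set \<Rightarrow> 'a poly set" where
  "fst_polys_of_zero_snd \<beta> C = {Poly k | k. (k, replicate \<beta> (0, 0)) \<in> C}"

lemma mem_fst_polys_of_zero_snd_iff:
  "s \<in> fst_polys_of_zero_snd \<beta> C \<longleftrightarrow> (\<exists>xs. s = Poly xs \<and> (xs, replicate \<beta> (0, 0)) \<in> C)"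
  unfolding fst_polys_of_zero_snd_def by blast

context
  fixes C :: "('a::field list \<times> ('a \<times> 'a) list) set" and p i \<alpha> \<beta> :: nat
  assumes code: "FR_skew_cyclic_code p i \<alpha> \<beta> C"
begin

lemma FR_code_zero_snd_length: "(xs, replicate \<beta> (0, 0)) \<in> C \<Longrightarrow> length xs = \<alpha>"
  using code unfolding FR_skew_cyclic_code_def by fastforce

lemma FR_code_zero_snd_add:
  assumes "(xs, replicate \<beta> (0, 0)) \<in> C" and "(ys, replicate \<beta> (0, 0)) \<in> C"
  shows "(map2 (+) xs ys, replicate \<beta> (0, 0)) \<in> C"
proof -
  have "vadd (xs, replicate \<beta> (0, 0)) (ys, replicate \<beta> (0, 0)) \<in> C"
    using code assms unfolding FR_skew_cyclic_code_def by blast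
  then show ?thesis by (simp add: vadd_def R_add_def zip_replicate)
qed

lemma FR_code_zero_snd_scale:
  assumes "(xs, replicate \<beta> (0, 0)) \<in> C"
  shows "(map ((*) c) xs, replicate \<beta> (0, 0)) \<in> C"
proof -
  have "smul (c, 0) (xs, replicate \<beta> (0, 0)) \<in> C"
    using code assms unfolding FR_skew_cyclic_code_def by blast
  then show ?thesis by (simp add: smul_def R_mult_def eta_def)
qed

lemma FR_code_zero_snd_shift:
  assumes "0 < p" and "(xs, replicate \<beta> (0, 0)) \<in> C"
  shows "(((\<lambda>ys. map (Theta p i) (rshift ys)) ^^ k) xs, replicate \<beta> (0, 0)) \<in> C"
proof (induction k)
  case (Suc k)
  then have "skew_sigma p i (((\<lambda>ys. map (Theta p i) (rshift ys)) ^^ k) xs, replicate \<beta> (0, 0)) \<in> C"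
    using code unfolding FR_skew_cyclic_code_def by blast
  moreover have "Theta p i (0 :: 'a) = 0"
    using \<open>0 < p\<close> by (simp add: Theta_def)
  ultimately show ?case
    by (simp add: skew_sigma_def rshift_replicate theta_R_def)
qed (simp add: assms)

lemma fst_polys_of_zero_snd_add:
  assumes "s \<in> fst_polys_of_zero_snd \<beta> C" and "t \<in> fst_polys_of_zero_snd \<beta> C"
  shows "s + t \<in> fst_polys_of_zero_snd \<beta> C"
proof -
  from assms obtain xs ys where "s = Poly xs" "t = Poly ys"
    and xs: "(xs, replicate \<beta> (0, 0)) \<in> C" and ys: "(ys, replicate \<beta> (0, 0)) \<in> C"
    unfolding mem_fst_polys_of_zero_snd_iff by blast
  moreover have "Poly (map2 (+) xs ys) = Poly xs + Poly ys"
    using xs ys by (simp add: Poly_map2_add FR_code_zero_snd_length)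
  ultimately show ?thesis
    unfolding mem_fst_polys_of_zero_snd_iff using FR_code_zero_snd_add[OF xs ys]
    by (intro exI[of _ "map2 (+) xs ys"]) simp
qed

lemma cyc_red_skew_mult_monom_mem_fst_polys_of_zero_snd:
  assumes "0 < p" and "0 < \<alpha>" and "s \<in> fst_polys_of_zero_snd \<beta> C"
  shows "cyc_red \<alpha> (skew_mult (Theta p i) (monom c k) s) \<in> fst_polys_of_zero_snd \<beta> C"
proof -
  from assms(3) obtain xs where s: "s = Poly xs" and xs: "(xs, replicate \<beta> (0, 0)) \<in> C"
    unfolding mem_fst_polys_of_zero_snd_iff by blast
  let ?ys = "map ((*) c) (((\<lambda>ys. map (Theta p i) (rshift ys)) ^^ k) xs)"
  have "cyc_red \<alpha> (skew_mult (Theta p i) (monom c k) s) = Poly ?ys"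
    unfolding s using assms FR_code_zero_snd_length[OF xs]
    by (simp add: cyc_red_skew_mult_monom_Poly Theta_def)
  moreover have "(?ys, replicate \<beta> (0, 0)) \<in> C"
    by (rule FR_code_zero_snd_scale FR_code_zero_snd_shift assms(1) xs)+
  ultimately show ?thesis
    unfolding mem_fst_polys_of_zero_snd_iff by blast
qed

lemma skew_left_submodule_fst_polys_of_zero_snd:
  assumes "0 < p" and "0 < \<alpha>"
  shows "skew_left_submodule (Theta p i) \<alpha> (fst_polys_of_zero_snd \<beta> C)"
proof -
  let ?N = "fst_polys_of_zero_snd \<beta> C"
  have Theta_0: "Theta p i (0 :: 'a) = 0"
    using assms(1) by (simp add: Theta_def)
  have "degree s < \<alpha>" if "s \<in> ?N" for s
    using that assms(2) FR_code_zero_snd_length degree_Poly_less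
    unfolding mem_fst_polys_of_zero_snd_iff by fastforce
  moreover have zero: "0 \<in> ?N"
    using code Poly_replicate_0[of \<alpha>]
    unfolding FR_skew_cyclic_code_def mem_fst_polys_of_zero_snd_iff by metis
  moreover have "cyc_red \<alpha> (skew_mult (Theta p i) f s) \<in> ?N" if "s \<in> ?N" for f s
    using Theta_0 cyc_red_skew_mult_mem_if_monom_mem[OF _ zero fst_polys_of_zero_snd_add
        cyc_red_skew_mult_monom_mem_fst_polys_of_zero_snd[OF assms that]] by blast
  ultimately show ?thesis
    unfolding skew_left_submodule_def using fst_polys_of_zero_snd_add by blast
qed

end

theorem lemma1:
  fixes C :: "('a::{field,finite} list \<times> ('a \<times> 'a) list) set"
    and p m i \<alpha> \<beta> :: nat
  assumes "prime p" and "card (UNIV :: 'a set) = p ^ m"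
    and "0 < \<alpha>" and "0 < \<beta>"
    and "FR_skew_cyclic_code p i \<alpha> \<beta> C"
  shows "let N = {Poly k | k. (k, replicate \<beta> (0,0)) \<in> C} in
           skew_left_submodule (Theta p i) \<alpha> N \<and>
           (\<exists>g. skew_right_dvd (Theta p i) g (monom 1 \<alpha> - 1) \<and>
                N = {cyc_red \<alpha> (skew_mult (Theta p i) f g) | f. True})"
proof -
  have "0 < p" using \<open>prime p\<close> prime_gt_0_nat by blast
  have Theta_0: "Theta p i (0 :: 'a) = 0" and Theta_1: "Theta p i (1 :: 'a) = 1"
    using \<open>0 < p\<close> by (simp_all add: Theta_def)
  have Theta_eq_0: "x = 0" if "Theta p i (x :: 'a) = 0" for x
    using that by (simp add: Theta_def)
  have sub: "skew_left_submodule (Theta p i) \<alpha> (fst_polys_of_zero_snd \<beta> C)"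
    using skew_left_submodule_fst_polys_of_zero_snd assms(5) \<open>0 < p\<close> \<open>0 < \<alpha>\<close> .
  then have "\<exists>g. skew_right_dvd (Theta p i) g (monom 1 \<alpha> - 1)
      \<and> fst_polys_of_zero_snd \<beta> C = {cyc_red \<alpha> (skew_mult (Theta p i) f g) | f. True}"
    using skew_left_submodule_generated_by_right_dvd[OF Theta_0 Theta_eq_0 Theta_1
        Theta_minus_1[OF assms(1,2)] \<open>0 < \<alpha>\<close>] by blast
  with sub show ?thesis by (simp add: fst_polys_of_zero_snd_def)
qed

end
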